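(* Let $s\ge 2$ be an integer and let $A\in\mathbb{R}^{s\times s}$ be the strictly lower triangular matrix with $a_{ij}=\frac{1}{s-1}$ for all $1\le j<i\le s$ and $a_{ij}=0$ otherwise (this is the coefficient matrix of the optimal second-order method SSPERK$(s,2)$, whose weights are $b=\frac{1}{s}\mathbf e$). Consider the two weight vectors $$\tilde b_1=\Big[\tfrac{1}{s-1},\ldots,\tfrac{1}{s-1},0\Big],\qquad \tilde b_2=\Big[\tfrac{s+1}{s^2},\tfrac1s,\ldots,\tfrac1s,\tfrac{s-1}{s^2}\Big]$$ (in $\tilde b_1$ the first $s-1$ entries equal $\frac1{s-1}$; in $\tilde b_2$ the entries $2,\dots,s-1$ equal $\frac1s$). Then for $k=1,2$ the explicit Runge--Kutta method $(A,\tilde b_k)$ is of order one (i.e. $\tilde b_k^T\mathbf e=1$), it is non-defective in the sense that $\tilde b_k^Tc\neq\frac12$ where $c=A\mathbf e$, and its SSP coefficient equals $s-1$ (the SSP coefficient of SSPERK$(s,2)$).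
   Context: An explicit $s$-stage Runge--Kutta method with strictly lower triangular coefficient matrix $A$ and weight vector $b$ is denoted $(A,b)$; $\mathbf e=(1,\dots,1)^T$ and $c=A\mathbf e$. SSP coefficient: with $K=\begin{pmatrix}A&0\\ b^T&0\end{pmatrix}\in\mathbb{R}^{(s+1)\times(s+1)}$, the SSP coefficient of $(A,b)$ is $\mathcal C(A,b)=\sup\{r\ge 0:\ (I+rK)^{-1}\text{ exists},\ K(I+rK)^{-1}\ge 0,\ rK(I+rK)^{-1}\mathbf e\le \mathbf e\}$, inequalities taken componentwise. *)

theory Defs
  imports "Jordan_Normal_Form.Matrix"
begin

definition ones_vec :: "nat \<Rightarrow> real vec" where
  "ones_vec n = vec n (\<lambda>_. 1)"

definition rk_K :: "real mat \<Rightarrow> real vec \<Rightarrow> real mat" where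
  "rk_K A b = (let s = dim_vec b in
     mat (s+1) (s+1) (\<lambda>(i,j). if i < s \<and> j < s then A $$ (i,j)
                              else if i = s \<and> j < s then b $ j else 0))"

definition ssp_coefficient :: "real mat \<Rightarrow> real vec \<Rightarrow> real" where
  "ssp_coefficient A b = (let s = dim_vec b; K = rk_K A b in
     Sup {r. r \<ge> 0 \<and>
       (\<exists>M \<in> carrier_mat (s+1) (s+1).
          inverts_mat (1\<^sub>m (s+1) + r \<cdot>\<^sub>m K) M \<and> inverts_mat M (1\<^sub>m (s+1) + r \<cdot>\<^sub>m K) \<and>
          (\<forall>i<s+1. \<forall>j<s+1. (K * M) $$ (i,j) \<ge> 0) \<and>
          (\<forall>i<s+1. ((r \<cdot>\<^sub>m K * M) *\<^sub>v ones_vec (s+1)) $ i \<le> 1))})"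

definition sspA :: "nat \<Rightarrow> real mat" where
  "sspA s = mat s s (\<lambda>(i,j). if j < i then 1 / (real s - 1) else 0)"

definition btilde1 :: "nat \<Rightarrow> real vec" where
  "btilde1 s = vec s (\<lambda>j. if j < s - 1 then 1 / (real s - 1) else 0)"

definition btilde2 :: "nat \<Rightarrow> real vec" where
  "btilde2 s = vec s (\<lambda>j. if j = 0 then (real s + 1) / (real s)^2
                          else if j = s - 1 then (real s - 1) / (real s)^2
                          else 1 / real s)"

end

theory Submission
  imports Defs "Jordan_Normal_Form.Determinant"
begin

text \<open>
Let \<open>K\<close> be the extended matrix of \<open>(A, b)\<close>. Its first row vanishes, so the first row of
\<open>(I + rK)\<^sup>-\<^sup>1\<close> is the first unit vector, and the second row of \<open>rK(I + rK)\<^sup>-\<^sup>1\<close> is \<open>r a\<^sub>2\<^sub>1 = r/(s-1)\<close>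
times it; the row-sum condition thus gives \<open>r \<le> s - 1\<close> for every \<open>b\<close>. At \<open>r = s - 1\<close> the inverse
is explicit: \<open>K(I + rK)\<^sup>-\<^sup>1\<close> carries \<open>1/(s-1)\<close> on the subdiagonal of the stage rows and the
decrements \<open>b\<^sub>j - b\<^sub>j\<^sub>+\<^sub>1\<close> (with \<open>b\<^sub>s\<^sub>+\<^sub>1 = 0\<close>) in the last row, whose sum telescopes to \<open>b\<^sub>1\<close>.
Hence \<open>s - 1\<close> is attained whenever \<open>b\<close> is nonincreasing, nonnegative and \<open>(s-1) b\<^sub>1 \<le> 1\<close>,
which holds for both weight vectors. For them \<open>b\<^sup>Tc\<close> equals \<open>1/2 - 1/(2(s-1))\<close> and \<open>1/2 - 1/s\<^sup>2\<close>.
\<close>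

definition ssp_admissible :: "real mat \<Rightarrow> real vec \<Rightarrow> real \<Rightarrow> bool" where
  "ssp_admissible A b r \<longleftrightarrow> (let s = dim_vec b; K = rk_K A b in
     r \<ge> 0 \<and>
     (\<exists>M \<in> carrier_mat (s+1) (s+1).
        inverts_mat (1\<^sub>m (s+1) + r \<cdot>\<^sub>m K) M \<and> inverts_mat M (1\<^sub>m (s+1) + r \<cdot>\<^sub>m K) \<and>
        (\<forall>i<s+1. \<forall>j<s+1. (K * M) $$ (i,j) \<ge> 0) \<and>
        (\<forall>i<s+1. ((r \<cdot>\<^sub>m K * M) *\<^sub>v ones_vec (s+1)) $ i \<le> 1)))"

lemma ssp_coefficient_eq_Sup_admissible:
  "ssp_coefficient A b = Sup {r. ssp_admissible A b r}"
  by (simp add: ssp_coefficient_def ssp_admissible_def Let_def)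

lemma index_mult_mat_sum:
  assumes "A \<in> carrier_mat m n" "B \<in> carrier_mat n p" "i < m" "j < p"
  shows "(A * B) $$ (i,j) = (\<Sum>k<n. A $$ (i,k) * B $$ (k,j))"
  using assms by (auto simp: scalar_prod_def lessThan_atLeast0 intro!: sum.cong)

lemma scalar_prod_sum:
  "dim_vec v = dim_vec b \<Longrightarrow> b \<bullet> v = (\<Sum>k<dim_vec b. b $ k * v $ k)"
  by (simp add: scalar_prod_def lessThan_atLeast0)

lemma mult_ones_vec_index:
  assumes "A \<in> carrier_mat m n" "i < m"
  shows "(A *\<^sub>v ones_vec n) $ i = (\<Sum>j<n. A $$ (i,j))"
  using assms by (auto simp: scalar_prod_def ones_vec_def lessThan_atLeast0)

lemma sum_lessThan_if_less:
  fixes i n :: nat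
  assumes "i \<le> n"
  shows "(\<Sum>j<n. if j < i then f j else 0) = (\<Sum>j<i. f j)"
proof -
  have "{j \<in> {..<n}. j < i} = {..<i}" using assms by auto
  then show ?thesis using sum.inter_filter[of "{..<n}" f "\<lambda>j. j < i"] by simp
qed

lemma sum_of_nat_lessThan: "(\<Sum>i<n. real i) = real n * (real n - 1) / 2"
  by (induction n) (auto simp: field_simps)

lemma rk_K_carrier: "dim_vec b = s \<Longrightarrow> rk_K A b \<in> carrier_mat (s+1) (s+1)"
  by (simp add: rk_K_def Let_def)

lemma index_rk_K:
  assumes "dim_vec b = s" "i \<le> s" "j \<le> s"
  shows "rk_K A b $$ (i,j) = (if i < s \<and> j < s then A $$ (i,j) else if i = s \<and> j < s then b $ j else 0)"
  using assms by (simp add: rk_K_def)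

lemma index_sspA: "i < s \<Longrightarrow> j < s \<Longrightarrow> sspA s $$ (i,j) = (if j < i then 1 / (real s - 1) else 0)"
  by (simp add: sspA_def)

lemma sspA_abscissae: "i < s \<Longrightarrow> (sspA s *\<^sub>v ones_vec s) $ i = real i / (real s - 1)"
  using mult_ones_vec_index[of "sspA s" s s i] by (simp add: sspA_def sum_lessThan_if_less)

lemma sum_sspA_abscissae:
  "s \<ge> 2 \<Longrightarrow> (\<Sum>i<s. (sspA s *\<^sub>v ones_vec s) $ i) = real s / 2"
  by (simp add: sspA_abscissae sum_divide_distrib[symmetric] sum_of_nat_lessThan field_simps)

subsection \<open>The upper bound\<close>

lemma row_sum_resolvent_first_column:
  fixes K M :: "real mat"
  assumes K: "K \<in> carrier_mat n n" and M: "M \<in> carrier_mat n n"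
    and inv: "(1\<^sub>m n + r \<cdot>\<^sub>m K) * M = 1\<^sub>m n"
    and row0: "\<And>j. j < n \<Longrightarrow> K $$ (0,j) = 0"
    and rowi: "\<And>j. 0 < j \<Longrightarrow> j < n \<Longrightarrow> K $$ (i,j) = 0" and i: "i < n"
  shows "((r \<cdot>\<^sub>m K * M) *\<^sub>v ones_vec n) $ i = r * K $$ (i,0)"
proof -
  have n: "0 < n" using i by simp
  have M0: "M $$ (0,j) = of_bool (j = 0)" if j: "j < n" for j
  proof -
    have "of_bool (j = 0) = ((1\<^sub>m n + r \<cdot>\<^sub>m K) * M) $$ (0,j)" using inv j n by simp
    also have "\<dots> = (\<Sum>k<n. (1\<^sub>m n + r \<cdot>\<^sub>m K) $$ (0,k) * M $$ (k,j))"
      using K M j n by (intro index_mult_mat_sum) auto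
    also have "\<dots> = (\<Sum>k<n. if k = 0 then M $$ (0,j) else 0)"
      using K row0 by (intro sum.cong) auto
    also have "\<dots> = M $$ (0,j)" using n by simp
    finally show ?thesis by simp
  qed
  have "(r \<cdot>\<^sub>m K * M) $$ (i,j) = r * K $$ (i,0) * of_bool (j = 0)" if j: "j < n" for j
  proof -
    have "(r \<cdot>\<^sub>m K * M) $$ (i,j) = (\<Sum>k<n. (r \<cdot>\<^sub>m K) $$ (i,k) * M $$ (k,j))"
      using K M i j by (intro index_mult_mat_sum) auto
    also have "\<dots> = (\<Sum>k<n. if k = 0 then r * K $$ (i,0) * M $$ (0,j) else 0)"
      using K i rowi by (intro sum.cong) auto
    finally show ?thesis using n j M0 by simp
  qed
  then have "(\<Sum>j<n. (r \<cdot>\<^sub>m K * M) $$ (i,j)) = (\<Sum>j<n. if j = 0 then r * K $$ (i,0) else 0)"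
    by (intro sum.cong) auto
  then show ?thesis
    using K M i n by (subst mult_ones_vec_index[of _ n n]) auto
qed

lemma ssp_admissible_sspA_le:
  assumes "dim_vec b = s" "s \<ge> 2" "ssp_admissible (sspA s) b r"
  shows "r \<le> real s - 1"
proof -
  let ?K = "rk_K (sspA s) b"
  obtain M where M: "M \<in> carrier_mat (s+1) (s+1)" and inv: "inverts_mat (1\<^sub>m (s+1) + r \<cdot>\<^sub>m ?K) M"
    and rows: "\<And>i. i < s+1 \<Longrightarrow> ((r \<cdot>\<^sub>m ?K * M) *\<^sub>v ones_vec (s+1)) $ i \<le> 1"
    using assms by (auto simp: ssp_admissible_def Let_def)
  have K: "?K \<in> carrier_mat (s+1) (s+1)" using rk_K_carrier assms(1) .
  have "((r \<cdot>\<^sub>m ?K * M) *\<^sub>v ones_vec (s+1)) $ 1 = r * ?K $$ (1,0)"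
    using assms(1,2) K inv
    by (intro row_sum_resolvent_first_column[OF K M])
       (auto simp: inverts_mat_def index_rk_K index_sspA)
  then have "r / (real s - 1) \<le> 1"
    using rows[of 1] assms(1,2) by (simp add: index_rk_K index_sspA)
  then show ?thesis using assms(2) by (simp add: divide_le_eq split: if_splits)
qed

subsection \<open>The explicit resolvent at \<open>r = s - 1\<close>\<close>

text \<open>The weight past the last index is read as zero, so the decrements telescope to \<open>b $ 0\<close>.\<close>

definition weight_decrement :: "real vec \<Rightarrow> nat \<Rightarrow> real" where
  "weight_decrement b j = b $ j - (if Suc j < dim_vec b then b $ Suc j else 0)"

lemma sum_weight_decrement: "dim_vec b > 0 \<Longrightarrow> (\<Sum>j<dim_vec b. weight_decrement b j) = b $ 0"
proof -
  assume pos: "dim_vec b > 0"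
  let ?f = "\<lambda>j. if j < dim_vec b then b $ j else 0"
  have "(\<Sum>j<dim_vec b. weight_decrement b j) = (\<Sum>j<dim_vec b. ?f j - ?f (Suc j))"
    by (intro sum.cong) (auto simp: weight_decrement_def)
  also have "\<dots> = ?f 0 - ?f (dim_vec b)" by (rule sum_lessThan_telescope')
  finally show ?thesis using pos by simp
qed

lemma weight_decrement_nonneg:
  assumes "\<And>j. Suc j < dim_vec b \<Longrightarrow> b $ Suc j \<le> b $ j" "b $ (dim_vec b - 1) \<ge> 0" "j < dim_vec b"
  shows "weight_decrement b j \<ge> 0"
proof (cases "Suc j < dim_vec b")
  case False
  then have "j = dim_vec b - 1" using assms(3) by simp
  then show ?thesis using False assms(2) by (simp add: weight_decrement_def)
qed (use assms(1) in \<open>simp add: weight_decrement_def\<close>)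

text \<open>The candidates for \<open>K(I + rK)\<^sup>-\<^sup>1\<close> and \<open>(I + rK)\<^sup>-\<^sup>1 = I - rK(I + rK)\<^sup>-\<^sup>1\<close> at \<open>r = s - 1\<close>.\<close>

definition sspA_K_resolvent :: "nat \<Rightarrow> real vec \<Rightarrow> real mat" where
  "sspA_K_resolvent s b = mat (s+1) (s+1) (\<lambda>(i,j).
     if i < s then (if i = Suc j then 1 / (real s - 1) else 0)
     else if j < s then weight_decrement b j else 0)"

definition sspA_resolvent :: "nat \<Rightarrow> real vec \<Rightarrow> real mat" where
  "sspA_resolvent s b = 1\<^sub>m (s+1) - (real s - 1) \<cdot>\<^sub>m sspA_K_resolvent s b"

lemma sspA_resolvent_carrier: "sspA_resolvent s b \<in> carrier_mat (s+1) (s+1)"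
  unfolding sspA_resolvent_def by (rule minus_carrier_mat) (auto simp: sspA_K_resolvent_def)

lemma index_sspA_resolvent:
  assumes "k \<le> s" "j \<le> s"
  shows "sspA_resolvent s b $$ (k,j) = of_bool (k = j)
     - (if k < s then of_bool (k = Suc j) else of_bool (j < s) * (real s - 1) * weight_decrement b j)"
  using assms by (simp add: sspA_resolvent_def sspA_K_resolvent_def)

lemma rk_K_sspA_mult_resolvent:
  assumes b: "dim_vec b = s" and s: "s \<ge> 2"
  shows "rk_K (sspA s) b * sspA_resolvent s b = sspA_K_resolvent s b"
proof (rule eq_matI)
  fix i j assume "i < dim_row (sspA_K_resolvent s b)" "j < dim_col (sspA_K_resolvent s b)"
  then have ij: "i \<le> s" "j \<le> s" by (auto simp: sspA_K_resolvent_def)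
  have KM: "(rk_K (sspA s) b * sspA_resolvent s b) $$ (i,j)
      = (\<Sum>k<s+1. rk_K (sspA s) b $$ (i,k) * sspA_resolvent s b $$ (k,j))"
    using ij rk_K_carrier[OF b, where A = "sspA s"] sspA_resolvent_carrier
    by (intro index_mult_mat_sum) auto
  show "(rk_K (sspA s) b * sspA_resolvent s b) $$ (i,j) = sspA_K_resolvent s b $$ (i,j)"
  proof (cases "i < s")
    case True
    have "(\<Sum>k<s+1. rk_K (sspA s) b $$ (i,k) * sspA_resolvent s b $$ (k,j))
        = (\<Sum>k<s+1. (if k = j then of_bool (j < i) / (real s - 1) else 0)
                   - (if k = Suc j then of_bool (Suc j < i) / (real s - 1) else 0))"
      using True ij b s by (intro sum.cong) (auto simp: index_rk_K index_sspA index_sspA_resolvent)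
    also have "\<dots> = of_bool (i = Suc j) / (real s - 1)"
      using True ij by (auto simp: sum_subtractf)
    finally show ?thesis using True ij KM by (simp add: sspA_K_resolvent_def)
  next
    case False
    then have i: "i = s" using ij by simp
    have "(\<Sum>k<s+1. rk_K (sspA s) b $$ (i,k) * sspA_resolvent s b $$ (k,j))
        = (\<Sum>k<s+1. (if k = j then (if j < s then b $ j else 0) else 0)
                   - (if k = Suc j then (if Suc j < s then b $ Suc j else 0) else 0))"
      using i ij b s by (intro sum.cong) (auto simp: index_rk_K index_sspA_resolvent)
    also have "\<dots> = (if j < s then weight_decrement b j else 0)"
      using ij b by (auto simp: sum_subtractf weight_decrement_def)
    finally show ?thesis using i ij KM by (simp add: sspA_K_resolvent_def)
  qed
qed (use b in \<open>auto simp: rk_K_def sspA_resolvent_def sspA_K_resolvent_def\<close>)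

lemma sspA_resolvent_inverts:
  assumes b: "dim_vec b = s" and s: "s \<ge> 2"
  shows "(1\<^sub>m (s+1) + (real s - 1) \<cdot>\<^sub>m rk_K (sspA s) b) * sspA_resolvent s b = 1\<^sub>m (s+1)"
proof -
  let ?K = "rk_K (sspA s) b" and ?M = "sspA_resolvent s b" and ?r = "real s - 1"
  have K: "?K \<in> carrier_mat (s+1) (s+1)" using rk_K_carrier b .
  have M: "?M \<in> carrier_mat (s+1) (s+1)" by (rule sspA_resolvent_carrier)
  have "(1\<^sub>m (s+1) + ?r \<cdot>\<^sub>m ?K) * ?M = 1\<^sub>m (s+1) * ?M + (?r \<cdot>\<^sub>m ?K) * ?M"
    using K M by (intro add_mult_distrib_mat) auto
  also have "\<dots> = ?M + ?r \<cdot>\<^sub>m (?K * ?M)"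
    using K M by (simp add: mult_smult_assoc_mat)
  also have "\<dots> = ?M + ?r \<cdot>\<^sub>m sspA_K_resolvent s b"
    by (simp only: rk_K_sspA_mult_resolvent[OF b s])
  also have "\<dots> = 1\<^sub>m (s+1)"
    by (rule eq_matI) (auto simp: sspA_resolvent_def sspA_K_resolvent_def)
  finally show ?thesis .
qed

lemma ssp_admissible_sspA:
  assumes b: "dim_vec b = s" and s: "s \<ge> 2"
    and mono: "\<And>j. Suc j < s \<Longrightarrow> b $ Suc j \<le> b $ j"
    and last: "b $ (s - 1) \<ge> 0" and first: "(real s - 1) * b $ 0 \<le> 1"
  shows "ssp_admissible (sspA s) b (real s - 1)"
proof -
  let ?K = "rk_K (sspA s) b" and ?M = "sspA_resolvent s b" and ?P = "sspA_K_resolvent s b"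
    and ?r = "real s - 1"
  have K: "?K \<in> carrier_mat (s+1) (s+1)" using rk_K_carrier b .
  have M: "?M \<in> carrier_mat (s+1) (s+1)" by (rule sspA_resolvent_carrier)
  have X: "1\<^sub>m (s+1) + ?r \<cdot>\<^sub>m ?K \<in> carrier_mat (s+1) (s+1)" using K by simp
  have XM: "(1\<^sub>m (s+1) + ?r \<cdot>\<^sub>m ?K) * ?M = 1\<^sub>m (s+1)" by (rule sspA_resolvent_inverts[OF b s])
  have MX: "?M * (1\<^sub>m (s+1) + ?r \<cdot>\<^sub>m ?K) = 1\<^sub>m (s+1)"
    by (rule mat_mult_left_right_inverse[OF X M XM])
  have KM: "?K * ?M = ?P" by (rule rk_K_sspA_mult_resolvent[OF b s])
  have nonneg: "?P $$ (i,j) \<ge> 0" if "i < s+1" "j < s+1" for i j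
    using that s weight_decrement_nonneg[of b j] mono last b
    by (auto simp: sspA_K_resolvent_def)
  have rows: "((?r \<cdot>\<^sub>m ?K * ?M) *\<^sub>v ones_vec (s+1)) $ i \<le> 1" if i: "i < s+1" for i
  proof -
    have P: "?P \<in> carrier_mat (s+1) (s+1)" by (simp add: sspA_K_resolvent_def)
    have RKM: "?r \<cdot>\<^sub>m ?K * ?M = ?r \<cdot>\<^sub>m ?P" using K M KM by (simp add: mult_smult_assoc_mat)
    have "((?r \<cdot>\<^sub>m ?K * ?M) *\<^sub>v ones_vec (s+1)) $ i = (\<Sum>j<s+1. (?r \<cdot>\<^sub>m ?P) $$ (i,j))"
      unfolding RKM by (rule mult_ones_vec_index) (use P i in auto)
    also have "\<dots> = ?r * (\<Sum>j<s+1. ?P $$ (i,j))"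
      using P i by (subst sum_distrib_left) (intro sum.cong; auto)
    also have "\<dots> \<le> 1"
    proof (cases "i < s")
      case True
      have "(\<Sum>j<s+1. ?P $$ (i,j)) = (\<Sum>j<s+1. if j = i - 1 then of_bool (0 < i) / ?r else 0)"
        using True by (intro sum.cong) (auto simp: sspA_K_resolvent_def)
      then show ?thesis using True s by simp
    next
      case False
      then have "(\<Sum>j<s+1. ?P $$ (i,j)) = (\<Sum>j<s. weight_decrement b j)"
        using i by (simp add: sspA_K_resolvent_def)
      then show ?thesis using sum_weight_decrement[of b] b s first by simp
    qed
    finally show ?thesis .
  qed
  show ?thesis
    unfolding ssp_admissible_def Let_def b inverts_mat_def
    using s M X XM MX KM nonneg rows by (auto intro!: bexI[of _ ?M])
qed

lemma ssp_coefficient_sspA: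
  assumes "dim_vec b = s" "s \<ge> 2"
    and "\<And>j. Suc j < s \<Longrightarrow> b $ Suc j \<le> b $ j"
    and "b $ (s - 1) \<ge> 0" "(real s - 1) * b $ 0 \<le> 1"
  shows "ssp_coefficient (sspA s) b = real s - 1"
  unfolding ssp_coefficient_eq_Sup_admissible
  using ssp_admissible_sspA[OF assms] ssp_admissible_sspA_le[OF assms(1,2)]
  by (intro cSup_eq_maximum) auto

subsection \<open>The two weight vectors\<close>

lemma btilde1_scalar_prod:
  assumes "dim_vec v = s" "s \<ge> 2"
  shows "btilde1 s \<bullet> v = (\<Sum>k<s-1. v $ k) / (real s - 1)"
proof -
  have "btilde1 s \<bullet> v = (\<Sum>k<s. if k < s-1 then v $ k / (real s - 1) else 0)"
    using assms by (auto simp: scalar_prod_sum btilde1_def intro!: sum.cong)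
  also have "\<dots> = (\<Sum>k<s-1. v $ k / (real s - 1))"
    by (rule sum_lessThan_if_less) simp
  finally show ?thesis by (simp add: sum_divide_distrib)
qed

lemma btilde1_order_one: "s \<ge> 2 \<Longrightarrow> btilde1 s \<bullet> ones_vec s = 1"
  by (simp add: btilde1_scalar_prod ones_vec_def of_nat_diff)

lemma btilde1_abscissae:
  "s \<ge> 2 \<Longrightarrow> btilde1 s \<bullet> (sspA s *\<^sub>v ones_vec s) = 1/2 - 1 / (2 * (real s - 1))"
proof -
  assume s: "s \<ge> 2"
  have "btilde1 s \<bullet> (sspA s *\<^sub>v ones_vec s) = (\<Sum>k<s-1. (sspA s *\<^sub>v ones_vec s) $ k) / (real s - 1)"
    by (rule btilde1_scalar_prod) (simp_all add: sspA_def s)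
  also have "(\<Sum>k<s-1. (sspA s *\<^sub>v ones_vec s) $ k) = (\<Sum>k<s-1. real k) / (real s - 1)"
    unfolding sum_divide_distrib by (intro sum.cong) (auto simp: sspA_abscissae)
  also have "(\<Sum>k<s-1. real k) = (real s - 1) * (real s - 2) / 2"
    using s by (simp add: sum_of_nat_lessThan of_nat_diff)
  also have "(real s - 1) * (real s - 2) / 2 / (real s - 1) / (real s - 1) = (real s - 2) / (2 * (real s - 1))"
    using s by simp
  also have "\<dots> = 1/2 - 1 / (2 * (real s - 1))"
    using s by (simp add: field_simps)
  finally show ?thesis .
qed

lemma ssp_coefficient_btilde1: "s \<ge> 2 \<Longrightarrow> ssp_coefficient (sspA s) (btilde1 s) = real s - 1"
  by (rule ssp_coefficient_sspA) (auto simp: btilde1_def)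

text \<open>The entries of \<open>btilde2\<close> are \<open>1/s\<close> perturbed by \<open>\<plusminus>1/s\<^sup>2\<close> at the two ends.\<close>

lemma btilde2_scalar_prod:
  assumes "dim_vec v = s" "s \<ge> 2"
  shows "btilde2 s \<bullet> v = (\<Sum>k<s. v $ k) / real s + (v $ 0 - v $ (s-1)) / (real s)^2"
proof -
  have entry: "btilde2 s $ k * x = x / real s
      + ((if k = 0 then x else 0) - (if k = s-1 then x else 0)) / (real s)^2" if "k < s" for k x
    using that assms(2) by (auto simp: btilde2_def field_simps power2_eq_square)
  have "btilde2 s \<bullet> v = (\<Sum>k<s. btilde2 s $ k * v $ k)"
    using assms(1) scalar_prod_sum[of v "btilde2 s"] by (simp add: btilde2_def)
  also have "\<dots> = (\<Sum>k<s. v $ k / real s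
      + ((if k = 0 then v $ k else 0) - (if k = s-1 then v $ k else 0)) / (real s)^2)"
    by (intro sum.cong) (simp_all add: entry)
  also have "\<dots> = (\<Sum>k<s. v $ k) / real s + (v $ 0 - v $ (s-1)) / (real s)^2"
    using assms(2) by (simp add: sum.distrib sum_subtractf sum_divide_distrib[symmetric])
  finally show ?thesis .
qed

lemma btilde2_order_one: "s \<ge> 2 \<Longrightarrow> btilde2 s \<bullet> ones_vec s = 1"
  by (simp add: btilde2_scalar_prod ones_vec_def)

lemma btilde2_abscissae:
  "s \<ge> 2 \<Longrightarrow> btilde2 s \<bullet> (sspA s *\<^sub>v ones_vec s) = 1/2 - 1 / (real s)^2"
proof -
  assume s: "s \<ge> 2"
  have "btilde2 s \<bullet> (sspA s *\<^sub>v ones_vec s) = (\<Sum>k<s. (sspA s *\<^sub>v ones_vec s) $ k) / real s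
      + ((sspA s *\<^sub>v ones_vec s) $ 0 - (sspA s *\<^sub>v ones_vec s) $ (s-1)) / (real s)^2"
    by (rule btilde2_scalar_prod) (simp_all add: sspA_def s)
  also have "\<dots> = 1/2 - 1 / (real s)^2"
    using s by (simp only: sum_sspA_abscissae) (simp add: sspA_abscissae of_nat_diff)
  finally show ?thesis .
qed

lemma ssp_coefficient_btilde2: "s \<ge> 2 \<Longrightarrow> ssp_coefficient (sspA s) (btilde2 s) = real s - 1"
  by (rule ssp_coefficient_sspA) (auto simp: btilde2_def field_simps power2_eq_square)

theorem mainTheorem1:
  fixes s :: nat
  assumes "s \<ge> 2"
  shows "\<forall>b \<in> {btilde1 s, btilde2 s}.
           b \<bullet> ones_vec s = 1 \<and>
           b \<bullet> (sspA s *\<^sub>v ones_vec s) \<noteq> 1/2 \<and>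
           ssp_coefficient (sspA s) b = real s - 1"
  using assms
  by (simp add: btilde1_order_one btilde1_abscissae ssp_coefficient_btilde1
      btilde2_order_one btilde2_abscissae ssp_coefficient_btilde2)

end
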